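(* Let $X=\left(\bigoplus_{i=1}^\infty\ell_\infty^i\right)_{\ell_1}$, the $\ell_1$-sum of the spaces $\ell_\infty^i$, $i\in\mathbb N$. Then $X$ is universally octahedral, but $X$ does not contain any subspace isomorphic to $c_0$ (in particular $X$ is not $c_0$-octahedral).
   Context: A Banach space $W$ is octahedral if for every finite dimensional subspace $E$ of $W$ and every $\varepsilon>0$ there exists $y\in W$, $\|y\|=1$, with $\|x+\lambda y\|\ge(1-\varepsilon)(\|x\|+|\lambda|)$ for all $x\in E$, $\lambda\in\mathbb R$. A real Banach space $X$ is universally octahedral if the space $L(Y,X)$ of bounded operators from $Y$ to $X$ with the operator norm is octahedral for every non-zero real Banach space $Y$. $X$ is $c_0$-octahedral if for every $x_1,\dots,x_n$ in the unit sphere of $X$ and every $\varepsilon>0$ there exists a subspace $Y\subseteq X$ isometric to $c_0$ such that $\|x_i+y\|>(1-\varepsilon)(1+\|y\|)$ for all $y\in Y$ and $1\le i\le n$. *)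

theory Defs
  imports "HOL-Analysis.Analysis"
begin

text \<open>An element is a double sequence x i j; block i (i = 0,1,2,...) is a vector in
  l_infinity^(i+1) with coordinates x i 0, ..., x i i (all other entries are 0).\<close>

definition blk :: "(nat \<Rightarrow> nat \<Rightarrow> real) \<Rightarrow> nat \<Rightarrow> real" where
  "blk x i = Max ((\<lambda>j. \<bar>x i j\<bar>) ` {..i})"

lemma blk_ge: "j \<le> i \<Longrightarrow> \<bar>x i j\<bar> \<le> blk x i"
  unfolding blk_def by (rule Max_ge) auto

lemma blk_nonneg: "0 \<le> blk x i"
  using blk_ge[of 0 i x] by auto

lemma blk_le: "(\<And>j. j \<le> i \<Longrightarrow> \<bar>x i j\<bar> \<le> c) \<Longrightarrow> blk x i \<le> c"
  unfolding blk_def by (subst Max_le_iff) auto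

lemma blk_add: "blk (\<lambda>i j. x i j + y i j) i \<le> blk x i + blk y i"
  by (rule blk_le) (smt (verit) blk_ge)

lemma blk_scale: "blk (\<lambda>i j. c * x i j) i = \<bar>c\<bar> * blk x i"
proof -
  have "mono ((*) \<bar>c\<bar>)" by (simp add: monoI mult_left_mono)
  then have "\<bar>c\<bar> * Max ((\<lambda>j. \<bar>x i j\<bar>) ` {..i}) = Max ((*) \<bar>c\<bar> ` ((\<lambda>j. \<bar>x i j\<bar>) ` {..i}))"
    by (rule mono_Max_commute) auto
  then show ?thesis unfolding blk_def by (simp add: image_image abs_mult)
qed

lemma blk_uminus: "blk (\<lambda>i j. - x i j) i = blk x i"
  unfolding blk_def by simp

lemma blk_zero: "blk (\<lambda>i j. 0) i = 0"
  unfolding blk_def by simp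

lemma blk_zero_fun: "blk (\<lambda>i j. 0) = (\<lambda>i. 0)"
  by (rule ext) (rule blk_zero)

lemma blk_uminus_fun: "blk (\<lambda>i j. - x i j) = blk x"
  by (rule ext) (rule blk_uminus)

lemma blk_scale_fun: "blk (\<lambda>i j. c * x i j) = (\<lambda>i. \<bar>c\<bar> * blk x i)"
  by (rule ext) (rule blk_scale)

typedef lsum = "{x :: nat \<Rightarrow> nat \<Rightarrow> real. (\<forall>i j. i < j \<longrightarrow> x i j = 0) \<and> summable (blk x)}"
  by (rule exI[of _ "\<lambda>i j. 0"]) (simp add: blk_zero_fun)

setup_lifting type_definition_lsum

lemma summable_blk_add:
  assumes "summable (blk x)" "summable (blk y)"
  shows "summable (blk (\<lambda>i j. x i j + y i j))"
  by (rule summable_comparison_test[OF _ summable_add[OF assms]])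
     (auto simp: blk_nonneg blk_add)

instantiation lsum :: real_normed_vector
begin

lift_definition zero_lsum :: lsum is "\<lambda>i j. 0" by (simp add: blk_zero_fun)

lift_definition plus_lsum :: "lsum \<Rightarrow> lsum \<Rightarrow> lsum" is "\<lambda>x y i j. x i j + y i j"
  by (simp add: summable_blk_add)

lift_definition uminus_lsum :: "lsum \<Rightarrow> lsum" is "\<lambda>x i j. - x i j"
  by (simp add: blk_uminus_fun)

lift_definition minus_lsum :: "lsum \<Rightarrow> lsum \<Rightarrow> lsum" is "\<lambda>x y i j. x i j - y i j"
proof -
  fix x y :: "nat \<Rightarrow> nat \<Rightarrow> real"
  assume "(\<forall>i j. i < j \<longrightarrow> x i j = 0) \<and> summable (blk x)"
     and "(\<forall>i j. i < j \<longrightarrow> y i j = 0) \<and> summable (blk y)"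
  then have "summable (blk (\<lambda>i j. x i j + - y i j))"
    by (intro summable_blk_add) (auto simp: blk_uminus_fun)
  then show "(\<forall>i j. i < j \<longrightarrow> x i j - y i j = 0) \<and> summable (blk (\<lambda>i j. x i j - y i j))"
    using \<open>(\<forall>i j. i < j \<longrightarrow> x i j = 0) \<and> _\<close> \<open>(\<forall>i j. i < j \<longrightarrow> y i j = 0) \<and> _\<close> by simp
qed

lift_definition scaleR_lsum :: "real \<Rightarrow> lsum \<Rightarrow> lsum" is "\<lambda>c x i j. c * x i j"
  by (simp add: blk_scale_fun summable_mult)

lift_definition norm_lsum :: "lsum \<Rightarrow> real" is "\<lambda>x. suminf (blk x)" .

definition dist_lsum :: "lsum \<Rightarrow> lsum \<Rightarrow> real" where "dist_lsum a b = norm (a - b)"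

definition sgn_lsum :: "lsum \<Rightarrow> lsum" where "sgn_lsum x = scaleR (inverse (norm x)) x"

definition uniformity_lsum :: "(lsum \<times> lsum) filter" where
  "uniformity_lsum = (INF e\<in>{0 <..}. principal {(x, y). dist x y < e})"

definition open_lsum :: "lsum set \<Rightarrow> bool" where
  "open_lsum S = (\<forall>x\<in>S. \<forall>\<^sub>F (x', y) in uniformity. x' = x \<longrightarrow> y \<in> S)"

lemma lsum_norm_eq_zero: "norm (x::lsum) = 0 \<longleftrightarrow> x = 0"
proof transfer
  fix x :: "nat \<Rightarrow> nat \<Rightarrow> real"
  assume x: "(\<forall>i j. i < j \<longrightarrow> x i j = 0) \<and> summable (blk x)"
  have "suminf (blk x) = 0 \<longleftrightarrow> (\<forall>i. blk x i = 0)"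
    using x by (intro suminf_eq_zero_iff) (auto simp: blk_nonneg)
  also have "\<dots> \<longleftrightarrow> x = (\<lambda>i j. 0)"
  proof
    assume h: "\<forall>i. blk x i = 0"
    show "x = (\<lambda>i j. 0)"
    proof (intro ext)
      fix i j
      show "x i j = 0"
      proof (cases "j \<le> i")
        case True then show ?thesis using blk_ge[OF True, of x] h by auto
      next
        case False then show ?thesis using x by auto
      qed
    qed
  qed (simp add: blk_zero_fun)
  finally show "suminf (blk x) = 0 \<longleftrightarrow> x = (\<lambda>i j. 0)" .
qed

lemma lsum_norm_triangle: "norm ((x::lsum) + y) \<le> norm x + norm y"
proof transfer
  fix x y :: "nat \<Rightarrow> nat \<Rightarrow> real"
  assume x: "(\<forall>i j. i < j \<longrightarrow> x i j = 0) \<and> summable (blk x)"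
     and y: "(\<forall>i j. i < j \<longrightarrow> y i j = 0) \<and> summable (blk y)"
  have "suminf (blk (\<lambda>i j. x i j + y i j)) \<le> suminf (\<lambda>i. blk x i + blk y i)"
    using x y by (intro suminf_le) (auto simp: blk_add summable_blk_add intro!: summable_add)
  also have "\<dots> = suminf (blk x) + suminf (blk y)"
    using x y by (intro suminf_add[symmetric]) auto
  finally show "suminf (blk (\<lambda>i j. x i j + y i j)) \<le> suminf (blk x) + suminf (blk y)" .
qed

lemma lsum_norm_scaleR: "norm (scaleR c (x::lsum)) = \<bar>c\<bar> * norm x"
  by transfer (simp add: blk_scale_fun suminf_mult)

instance
proof
  fix x y z :: lsum and a b :: real
  show "x + y + z = x + (y + z)" by transfer (simp add: algebra_simps)
  show "x + y = y + x" by transfer (simp add: algebra_simps)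
  show "0 + x = x" by transfer simp
  show "- x + x = 0" by transfer simp
  show "x - y = x + - y" by transfer simp
  show "a *\<^sub>R (x + y) = a *\<^sub>R x + a *\<^sub>R y" by transfer (simp add: algebra_simps)
  show "(a + b) *\<^sub>R x = a *\<^sub>R x + b *\<^sub>R x" by transfer (simp add: algebra_simps)
  show "a *\<^sub>R b *\<^sub>R x = (a * b) *\<^sub>R x" by transfer (simp add: mult.assoc)
  show "1 *\<^sub>R x = x" by transfer simp
  show "dist x y = norm (x - y)" by (simp add: dist_lsum_def)
  show "sgn x = inverse (norm x) *\<^sub>R x" by (simp add: sgn_lsum_def)
  show "(uniformity :: (lsum \<times> lsum) filter) = (INF e\<in>{0<..}. principal {(x, y). dist x y < e})"
    by (simp add: uniformity_lsum_def)
  show "norm x = 0 \<longleftrightarrow> x = 0" by (rule lsum_norm_eq_zero)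
  show "norm (x + y) \<le> norm x + norm y" by (rule lsum_norm_triangle)
  show "norm (a *\<^sub>R x) = \<bar>a\<bar> * norm x" by (rule lsum_norm_scaleR)
next
  fix U :: "lsum set"
  show "open U = (\<forall>x\<in>U. \<forall>\<^sub>F (x', y) in uniformity. x' = x \<longrightarrow> y \<in> U)"
    by (simp add: open_lsum_def)
qed

end

definition octahedral :: "'a::real_normed_vector set \<Rightarrow> bool" where
  "octahedral W \<longleftrightarrow>
    (\<forall>E \<epsilon>. subspace E \<and> E \<subseteq> W \<and> (\<exists>B. finite B \<and> E = span B) \<and> \<epsilon> > (0::real) \<longrightarrow>
      (\<exists>y\<in>W. norm y = 1 \<and>
         (\<forall>x\<in>E. \<forall>t::real. norm (x + t *\<^sub>R y) \<ge> (1 - \<epsilon>) * (norm x + \<bar>t\<bar>))))"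

definition c0 :: "(nat \<Rightarrow> real) set" where
  "c0 = {f. f \<longlonglongrightarrow> 0}"

definition c0_norm :: "(nat \<Rightarrow> real) \<Rightarrow> real" where
  "c0_norm f = (SUP n. \<bar>f n\<bar>)"

definition c0_linear :: "((nat \<Rightarrow> real) \<Rightarrow> 'a::real_vector) \<Rightarrow> bool" where
  "c0_linear T \<longleftrightarrow>
     (\<forall>f\<in>c0. \<forall>g\<in>c0. T (\<lambda>n. f n + g n) = T f + T g) \<and>
     (\<forall>f\<in>c0. \<forall>c. T (\<lambda>n. c * f n) = c *\<^sub>R T f)"

definition contains_c0 :: "'a::real_normed_vector itself \<Rightarrow> bool" where
  "contains_c0 _ \<longleftrightarrow>
     (\<exists>T :: (nat \<Rightarrow> real) \<Rightarrow> 'a. c0_linear T \<and>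
        (\<exists>a b. 0 < a \<and> 0 < b \<and>
           (\<forall>f\<in>c0. a * c0_norm f \<le> norm (T f) \<and> norm (T f) \<le> b * c0_norm f)))"

definition c0_octahedral :: "'a::real_normed_vector itself \<Rightarrow> bool" where
  "c0_octahedral _ \<longleftrightarrow>
     (\<forall>F::'a set. \<forall>\<epsilon>::real. finite F \<and> F \<noteq> {} \<and> (\<forall>x\<in>F. norm x = 1) \<and> \<epsilon> > 0 \<longrightarrow>
        (\<exists>T :: (nat \<Rightarrow> real) \<Rightarrow> 'a. c0_linear T \<and> (\<forall>f\<in>c0. norm (T f) = c0_norm f) \<and>
           (\<forall>x\<in>F. \<forall>y\<in>T ` c0. norm (x + y) > (1 - \<epsilon>) * (1 + norm y))))"

end

theory Submission
  imports Defs
begin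

(*
  On the l1-sum X of the spaces l_infinity^n, vectors supported on disjoint sets of blocks
  have additive norms, and every vector lives essentially on finitely many blocks.

  Octahedrality of L(Y, X): the unit sphere of a finite dimensional subspace E of L(Y, X)
  is compact, so finitely many unit vectors y_1, ..., y_m of Y suffice for every T in E to
  almost attain its norm at one of them. Choose a block n >= m - 1 on which all T y_k are
  small, and let S y have n-th block (phi_1 y, ..., phi_m y) for Hahn-Banach functionals
  phi_k norming y_k. Then norm S = 1 and, evaluating at a suitable y_k,
  norm (T + t S) >= norm T + |t| up to a small error.

  No copy of c0: if T embeds c0 isomorphically, T is bounded on finitely supported sign
  sequences, which forces every coordinate of the images T e_n to be absolutely summable
  in n; so T e_n escapes to far blocks. Adding far-out T e_n with suitable signs one at a
  time makes norm (T g) grow linearly in the number of steps, although g stays a sign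
  sequence.
*)

section \<open>Norming functionals\<close>

text \<open>Graphs of linear functionals on subspaces that are dominated by the norm, so that Zorn's
  lemma applies to the subset order. Single-valuedness need not be required: it follows
  from domination at the origin.\<close>
definition dominated_graph :: "('a::real_normed_vector \<times> real) set \<Rightarrow> bool" where
  "dominated_graph G \<longleftrightarrow> subspace G \<and> (\<forall>(x, r)\<in>G. r \<le> norm x)"

lemma dominated_graph_single_valued:
  assumes "dominated_graph G" "(x, r) \<in> G" "(x, s) \<in> G"
  shows "r = s"
proof -
  have sub: "subspace G" and dom: "\<And>x r. (x, r) \<in> G \<Longrightarrow> r \<le> norm x"
    using assms(1) unfolding dominated_graph_def by auto
  have "(0, r - s) \<in> G" "(0, s - r) \<in> G"
    using subspace_diff[OF sub assms(2,3)] subspace_diff[OF sub assms(3,2)] by simp_all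
  then show ?thesis using dom[of 0 "r - s"] dom[of 0 "s - r"] by simp
qed

lemma dominated_graph_span_singleton: "dominated_graph (span {(y, norm y)})"
  unfolding dominated_graph_def
proof (intro conjI subspace_span ballI)
  fix p assume "p \<in> span {(y, norm y)}"
  then obtain k where "p = k *\<^sub>R (y, norm y)" by (auto simp: span_singleton)
  then show "case p of (x, r) \<Rightarrow> r \<le> norm x"
    by (simp add: mult_right_mono[OF abs_ge_self norm_ge_zero])
qed

lemma dominated_graph_chain_Union:
  assumes "C \<noteq> {}" "subset.chain {G. dominated_graph G} C"
  shows "dominated_graph (\<Union>C)"
proof -
  have chain: "\<And>G H. G \<in> C \<Longrightarrow> H \<in> C \<Longrightarrow> G \<subseteq> H \<or> H \<subseteq> G"
    and dom: "\<And>G. G \<in> C \<Longrightarrow> dominated_graph G"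
    using assms(2) unfolding subset.chain_def by auto
  have "subspace (\<Union>C)"
    unfolding subspace_def
  proof (intro conjI ballI allI)
    obtain G where "G \<in> C" using assms(1) by blast
    then show "0 \<in> \<Union>C" using dom[of G] subspace_0 unfolding dominated_graph_def by blast
  next
    fix p q assume "p \<in> \<Union>C" "q \<in> \<Union>C"
    then obtain G H where "G \<in> C" "H \<in> C" "p \<in> G" "q \<in> H" by blast
    then show "p + q \<in> \<Union>C"
      using chain[of G H] dom subspace_add unfolding dominated_graph_def by blast
  next
    fix c p assume "p \<in> \<Union>C"
    then show "c *\<^sub>R p \<in> \<Union>C" using dom subspace_scale unfolding dominated_graph_def by blast
  qed
  then show ?thesis using dom unfolding dominated_graph_def by blast
qed

lemma dominated_graph_extend:
  assumes dom: "dominated_graph G"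
    and lower: "\<And>v s. (v, s) \<in> G \<Longrightarrow> s - norm (v - z) \<le> r"
    and upper: "\<And>w s. (w, s) \<in> G \<Longrightarrow> r \<le> norm (w + z) - s"
  shows "dominated_graph (span (insert (z, r) G))"
  unfolding dominated_graph_def
proof (intro conjI subspace_span ballI)
  have sub: "subspace G" using dom unfolding dominated_graph_def by blast
  fix p assume "p \<in> span (insert (z, r) G)"
  moreover have "span G = G" using sub by (simp add: span_eq_iff)
  ultimately obtain a where "p - a *\<^sub>R (z, r) \<in> G"
    using span_insert[of "(z, r)" G] by auto
  then obtain v s where vs: "(v, s) \<in> G" "p = (v + a *\<^sub>R z, s + a * r)"
    by (cases p) auto
  have "s + a * r \<le> norm (v + a *\<^sub>R z)"
  proof (cases a "0::real" rule: linorder_cases)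
    case less
    have "(inverse (- a)) *\<^sub>R (v, s) \<in> G" using subspace_scale[OF sub vs(1)] .
    then have "s / (- a) - norm (v /\<^sub>R (- a) - z) \<le> r"
      using lower by (simp add: divide_inverse_commute)
    moreover have "norm (v /\<^sub>R (- a) - z) = norm (v + a *\<^sub>R z) / (- a)"
    proof -
      have "v /\<^sub>R (- a) - z = inverse (- a) *\<^sub>R (v + a *\<^sub>R z)" using less by (simp add: algebra_simps)
      then show ?thesis using less by (simp add: divide_inverse_commute)
    qed
    ultimately show ?thesis using less by (simp add: field_simps)
  next
    case equal
    then show ?thesis using dom vs(1) unfolding dominated_graph_def by auto
  next
    case greater
    have "(inverse a) *\<^sub>R (v, s) \<in> G" using subspace_scale[OF sub vs(1)] .
    then have "r \<le> norm (v /\<^sub>R a + z) - s / a"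
      using upper by (simp add: divide_inverse_commute)
    moreover have "norm (v /\<^sub>R a + z) = norm (v + a *\<^sub>R z) / a"
    proof -
      have "v /\<^sub>R a + z = inverse a *\<^sub>R (v + a *\<^sub>R z)" using greater by (simp add: algebra_simps)
      then show ?thesis using greater by (simp add: divide_inverse_commute)
    qed
    ultimately show ?thesis using greater by (simp add: field_simps)
  qed
  then show "case p of (x, r) \<Rightarrow> r \<le> norm x" using vs(2) by simp
qed

lemma maximal_dominated_graph_total:
  assumes dom: "dominated_graph M"
    and maximal: "\<And>G. dominated_graph G \<Longrightarrow> M \<subseteq> G \<Longrightarrow> G = M"
  shows "\<exists>r. (z, r) \<in> M"
proof (rule ccontr)
  assume z: "\<nexists>r. (z, r) \<in> M"
  have sub: "subspace M" and bound: "\<And>x r. (x, r) \<in> M \<Longrightarrow> r \<le> norm x"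
    using dom unfolding dominated_graph_def by auto
  have key: "s - norm (v - z) \<le> norm (w + z) - t" if "(v, s) \<in> M" "(w, t) \<in> M" for v s w t
  proof -
    have "s + t \<le> norm (v + w)" using bound subspace_add[OF sub that] by simp
    also have "\<dots> \<le> norm (v - z) + norm (w + z)"
      using norm_triangle_ineq[of "v - z" "w + z"] by simp
    finally show ?thesis by simp
  qed
  define r where "r = (SUP p\<in>M. snd p - norm (fst p - z))"
  have M0: "(0, 0) \<in> M" using subspace_0[OF sub] by (simp add: zero_prod_def)
  have bdd: "bdd_above ((\<lambda>p. snd p - norm (fst p - z)) ` M)"
    using key[OF _ M0] by (intro bdd_aboveI2) auto
  have "dominated_graph (span (insert (z, r) M))"
  proof (rule dominated_graph_extend[OF dom])
    show "s - norm (v - z) \<le> r" if "(v, s) \<in> M" for v s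
      unfolding r_def using cSUP_upper[OF that bdd] by simp
    show "r \<le> norm (w + z) - t" if "(w, t) \<in> M" for w t
      unfolding r_def using M0 key[OF _ that] by (intro cSUP_least) auto
  qed
  then have "span (insert (z, r) M) = M"
    by (rule maximal) (use span_superset in blast)
  then show False using z span_superset[of "insert (z, r) M"] by blast
qed

lemma norming_functional_exists:
  fixes y :: "'a::real_normed_vector"
  shows "\<exists>f. linear f \<and> (\<forall>x. \<bar>f x\<bar> \<le> norm x) \<and> f y = norm y"
proof -
  define A where "A = {G. dominated_graph G \<and> (y, norm y) \<in> G}"
  have A_ne: "A \<noteq> {}"
    unfolding A_def using dominated_graph_span_singleton span_base[of "(y, norm y)"] by blast
  have chain_Union: "\<Union>C \<in> A" if ne: "C \<noteq> {}" and ch: "subset.chain A C" for C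
  proof -
    obtain G where "G \<in> C" using ne by blast
    then have "(y, norm y) \<in> \<Union>C" using ch unfolding A_def subset.chain_def by blast
    moreover have "subset.chain {G. dominated_graph G} C"
      using ch unfolding A_def subset.chain_def by blast
    ultimately show ?thesis using dominated_graph_chain_Union[OF ne] unfolding A_def by simp
  qed
  obtain M where "M \<in> A" and maximal: "\<forall>G\<in>A. M \<subseteq> G \<longrightarrow> G = M"
    using subset_Zorn_nonempty[OF A_ne chain_Union] by blast
  then have dom: "dominated_graph M" and yM: "(y, norm y) \<in> M" unfolding A_def by auto
  have sub: "subspace M" and bound: "\<And>x r. (x, r) \<in> M \<Longrightarrow> r \<le> norm x"
    using dom unfolding dominated_graph_def by auto
  define f where "f x = (THE r. (x, r) \<in> M)" for x
  have graph: "(x, f x) \<in> M" for x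
  proof -
    have "\<exists>r. (x, r) \<in> M"
    proof (rule maximal_dominated_graph_total[OF dom])
      show "G = M" if "dominated_graph G" "M \<subseteq> G" for G
        using maximal that yM unfolding A_def by blast
    qed
    then have "\<exists>!r. (x, r) \<in> M" using dominated_graph_single_valued[OF dom] by blast
    then show ?thesis unfolding f_def by (rule theI')
  qed
  have f_eq: "f x = r" if "(x, r) \<in> M" for x r
    using dominated_graph_single_valued[OF dom graph that] .
  have "linear f"
  proof (rule linearI)
    show "f (x + x') = f x + f x'" for x x'
      using subspace_add[OF sub graph graph] by (intro f_eq) simp
    show "f (c *\<^sub>R x) = c *\<^sub>R f x" for c x
      using subspace_scale[OF sub graph, of c] by (intro f_eq) simp
  qed
  moreover have "\<bar>f x\<bar> \<le> norm x" for x
    using bound[OF graph, of x] bound[OF graph, of "- x"] linear_neg[OF \<open>linear f\<close>, of x] by simp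
  ultimately show ?thesis using f_eq[OF yM] by metis
qed

section \<open>Blocks of the l1-sum\<close>

lemma Rep_lsum_upper_zero: "i < j \<Longrightarrow> Rep_lsum x i j = 0"
  using Rep_lsum[of x] by simp

lemma summable_blk_Rep_lsum: "summable (blk (Rep_lsum x))"
  using Rep_lsum[of x] by simp

lemma blk_le_norm_lsum: "blk (Rep_lsum x) i \<le> norm x"
proof -
  have "sum (blk (Rep_lsum x)) {i} \<le> suminf (blk (Rep_lsum x))"
    by (rule sum_le_suminf) (auto simp: summable_blk_Rep_lsum blk_nonneg)
  then show ?thesis by (simp add: norm_lsum.rep_eq)
qed

lemma abs_Rep_lsum_le_norm: "\<bar>Rep_lsum x i j\<bar> \<le> norm x"
proof (cases "j \<le> i")
  case True
  then show ?thesis using blk_ge[OF True, of "Rep_lsum x"] blk_le_norm_lsum[of x i] by linarith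
next
  case False
  then show ?thesis by (simp add: Rep_lsum_upper_zero)
qed

lemma blk_row_zero: "(\<And>j. w i j = 0) \<Longrightarrow> blk w i = 0"
  using blk_le[of i w 0] blk_nonneg[of w i] by simp

lemma
  assumes "\<And>i j. i \<noteq> n \<Longrightarrow> w i j = 0" and "\<And>j. n < j \<Longrightarrow> w n j = 0"
  shows Rep_lsum_Abs_lsum_single_block: "Rep_lsum (Abs_lsum w) = w"
    and norm_Abs_lsum_single_block: "norm (Abs_lsum w) = blk w n"
proof -
  have blk_other: "blk w i = 0" if "i \<noteq> n" for i
    using assms(1)[OF that] by (intro blk_row_zero)
  have "summable (blk w)" by (rule summable_finite[of "{n}"]) (use blk_other in auto)
  moreover have "\<forall>i j. i < j \<longrightarrow> w i j = 0" using assms by (metis less_irrefl)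
  ultimately show rep: "Rep_lsum (Abs_lsum w) = w" by (intro Abs_lsum_inverse) auto
  have "suminf (blk w) = (\<Sum>i\<in>{n}. blk w i)" by (rule suminf_finite) (use blk_other in auto)
  then show "norm (Abs_lsum w) = blk w n" by (simp add: norm_lsum.rep_eq rep)
qed

lemma Rep_lsum_sum: "Rep_lsum (sum f A) i j = (\<Sum>a\<in>A. Rep_lsum (f a) i j)"
  by (induction A rule: infinite_finite_induct) (auto simp: zero_lsum.rep_eq plus_lsum.rep_eq)

lemma blk_attained: "\<exists>j\<le>i. blk u i = \<bar>u i j\<bar>"
proof -
  have "blk u i \<in> (\<lambda>j. \<bar>u i j\<bar>) ` {..i}" unfolding blk_def by (rule Max_in) auto
  then show ?thesis by auto
qed

lemma blk_add_plus_blk_diff_ge: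
  "2 * max (blk u i) (blk v i) \<le> blk (\<lambda>i j. u i j + v i j) i + blk (\<lambda>i j. u i j - v i j) i"
proof -
  have *: "\<bar>u i j + v i j\<bar> + \<bar>u i j - v i j\<bar> \<le> blk (\<lambda>i j. u i j + v i j) i + blk (\<lambda>i j. u i j - v i j) i"
    if "j \<le> i" for j
    using blk_ge[OF that, of "\<lambda>i j. u i j + v i j"] blk_ge[OF that, of "\<lambda>i j. u i j - v i j"] by simp
  obtain j k where "j \<le> i" "blk u i = \<bar>u i j\<bar>" "k \<le> i" "blk v i = \<bar>v i k\<bar>"
    using blk_attained by metis
  then show ?thesis using *[of j] *[of k] by linarith
qed

lemma blk_Rep_lsum_sum_le: "blk (Rep_lsum (sum f A)) n \<le> (\<Sum>a\<in>A. blk (Rep_lsum (f a)) n)"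
proof (induction A rule: infinite_finite_induct)
  case (insert a A)
  then show ?case
    using blk_add[of "Rep_lsum (f a)" "Rep_lsum (sum f A)" n] by (simp add: plus_lsum.rep_eq)
qed (simp_all add: zero_lsum.rep_eq blk_zero)

lemma blk_Rep_lsum_scaleR: "blk (Rep_lsum (c *\<^sub>R x)) n = \<bar>c\<bar> * blk (Rep_lsum x) n"
  by (simp add: scaleR_lsum.rep_eq blk_scale)

lemma norm_add_single_block_ge:
  assumes q: "\<And>i j. i \<noteq> n \<Longrightarrow> Rep_lsum q i j = 0"
  shows "norm p - 2 * blk (Rep_lsum p) n + blk (Rep_lsum q) n \<le> norm (p + q)"
proof -
  have same: "blk (Rep_lsum (p + q)) i = blk (Rep_lsum p) i" if "i \<noteq> n" for i
    using q[OF that] by (simp add: plus_lsum.rep_eq blk_def)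
  have "norm (p + q) - norm p = (\<Sum>i. blk (Rep_lsum (p + q)) i - blk (Rep_lsum p) i)"
    by (simp add: norm_lsum.rep_eq suminf_diff summable_blk_Rep_lsum)
  also have "\<dots> = (\<Sum>i\<in>{n}. blk (Rep_lsum (p + q)) i - blk (Rep_lsum p) i)"
    by (rule suminf_finite) (auto simp: same)
  finally have "norm (p + q) - norm p = blk (Rep_lsum (p + q)) n - blk (Rep_lsum p) n" by simp
  moreover have "blk (Rep_lsum q) n \<le> blk (Rep_lsum (p + q)) n + blk (Rep_lsum p) n"
  proof (rule blk_le)
    fix j assume "j \<le> n"
    then show "\<bar>Rep_lsum q n j\<bar> \<le> blk (Rep_lsum (p + q)) n + blk (Rep_lsum p) n"
      using blk_ge[of j n "Rep_lsum (p + q)"] blk_ge[of j n "Rep_lsum p"]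
      by (simp add: plus_lsum.rep_eq)
  qed
  ultimately show ?thesis by linarith
qed

lemma tendsto_blk_zero:
  assumes "\<And>j. j \<le> i \<Longrightarrow> (\<lambda>n. x n i j) \<longlonglongrightarrow> 0"
  shows "(\<lambda>n. blk (x n) i) \<longlonglongrightarrow> 0"
proof (rule Lim_null_comparison)
  show "(\<lambda>n. \<Sum>j\<le>i. \<bar>x n i j\<bar>) \<longlonglongrightarrow> 0"
    using assms by (intro tendsto_null_sum) (simp add: tendsto_rabs_zero_iff)
  have "blk (x n) i \<le> (\<Sum>j\<le>i. \<bar>x n i j\<bar>)" for n
    by (rule blk_le) (rule member_le_sum[where f = "\<lambda>j. \<bar>x n i j\<bar>"], auto)
  then show "\<forall>\<^sub>F n in sequentially. norm (blk (x n) i) \<le> (\<Sum>j\<le>i. \<bar>x n i j\<bar>)"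
    by (simp add: blk_nonneg)
qed

lemma norm_lsum_add_plus_diff_ge:
  fixes u v :: lsum
  assumes tail: "(\<Sum>i. blk (Rep_lsum u) (i + M)) \<le> \<delta>" and head: "(\<Sum>i<M. blk (Rep_lsum v) i) \<le> \<delta>"
  shows "2 * (norm u + norm v) - 4 * \<delta> \<le> norm (u + v) + norm (u - v)"
proof -
  define h where "h i = (if i < M then blk (Rep_lsum u) i else blk (Rep_lsum v) i)" for i
  have su: "summable (blk (Rep_lsum u))" and sv: "summable (blk (Rep_lsum v))"
    by (rule summable_blk_Rep_lsum)+
  have sh: "summable h"
    by (rule summable_comparison_test[OF _ summable_add[OF su sv]])
       (auto simp: h_def blk_nonneg)
  have "suminf h = sum (blk (Rep_lsum u)) {..<M} + (\<Sum>i. blk (Rep_lsum v) (i + M))"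
    using suminf_split_initial_segment[OF sh, of M] by (simp add: h_def)
  also have "\<dots> = norm u - (\<Sum>i. blk (Rep_lsum u) (i + M)) + norm v - (\<Sum>i<M. blk (Rep_lsum v) i)"
    using suminf_split_initial_segment[OF su, of M] suminf_split_initial_segment[OF sv, of M]
    by (simp add: norm_lsum.rep_eq)
  finally have lower: "norm u + norm v - 2 * \<delta> \<le> suminf h" using tail head by linarith
  have "2 * suminf h \<le> (\<Sum>i. blk (Rep_lsum (u + v)) i + blk (Rep_lsum (u - v)) i)"
  proof (subst suminf_mult[OF sh, symmetric], rule suminf_le)
    show "2 * h i \<le> blk (Rep_lsum (u + v)) i + blk (Rep_lsum (u - v)) i" for i
      using blk_add_plus_blk_diff_ge[of "Rep_lsum u" i "Rep_lsum v"]
      by (auto simp: h_def plus_lsum.rep_eq minus_lsum.rep_eq)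
  qed (auto intro!: summable_mult sh summable_add summable_blk_Rep_lsum)
  also have "\<dots> = norm (u + v) + norm (u - v)"
    by (simp add: norm_lsum.rep_eq suminf_add[OF summable_blk_Rep_lsum summable_blk_Rep_lsum])
  finally show ?thesis using lower by argo
qed

lemma norm_lsum_add_or_diff_ge:
  fixes u v :: lsum
  assumes "(\<Sum>i. blk (Rep_lsum u) (i + M)) \<le> \<delta>" "(\<Sum>i<M. blk (Rep_lsum v) i) \<le> \<delta>"
  obtains s :: real where "\<bar>s\<bar> = 1" "norm u + norm v - 2 * \<delta> \<le> norm (u + s *\<^sub>R v)"
proof (cases "norm (u - v) \<le> norm (u + v)")
  case True
  then show ?thesis using that[of 1] norm_lsum_add_plus_diff_ge[OF assms] by simp
next
  case False
  then show ?thesis using that[of "-1"] norm_lsum_add_plus_diff_ge[OF assms] by simp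
qed

section \<open>The l1-sum contains no copy of c0\<close>

definition c0_unit :: "nat \<Rightarrow> nat \<Rightarrow> real" where
  "c0_unit n = (\<lambda>k. if k = n then 1 else 0)"

lemma finite_support_in_c0: "(\<And>k. K \<le> k \<Longrightarrow> f k = 0) \<Longrightarrow> f \<in> c0"
  unfolding c0_def by (auto intro!: tendsto_eventually exI[of _ K] simp: eventually_sequentially)

lemma c0_unit_in_c0: "c0_unit n \<in> c0"
  by (rule finite_support_in_c0[of "Suc n"]) (auto simp: c0_unit_def)

lemma scale_in_c0: "f \<in> c0 \<Longrightarrow> (\<lambda>k. c * f k) \<in> c0"
  unfolding c0_def by (simp add: tendsto_mult_right_zero)

lemma c0_norm_le: "(\<And>k. \<bar>f k\<bar> \<le> c) \<Longrightarrow> c0_norm f \<le> c"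
  unfolding c0_norm_def by (rule cSUP_least) auto

lemma c0_norm_c0_unit: "c0_norm (c0_unit n) = 1"
proof (rule antisym)
  show "c0_norm (c0_unit n) \<le> 1" by (rule c0_norm_le) (simp add: c0_unit_def)
  have "bdd_above (range (\<lambda>k. \<bar>c0_unit n k\<bar>))"
    by (rule bdd_aboveI[of _ 1]) (auto simp: c0_unit_def)
  then show "1 \<le> c0_norm (c0_unit n)"
    unfolding c0_norm_def by (rule cSUP_upper2[of _ _ n]) (auto simp: c0_unit_def)
qed

lemma c0_linear_add: "c0_linear T \<Longrightarrow> f \<in> c0 \<Longrightarrow> g \<in> c0 \<Longrightarrow> T (\<lambda>k. f k + g k) = T f + T g"
  unfolding c0_linear_def by blast

lemma c0_linear_scale: "c0_linear T \<Longrightarrow> f \<in> c0 \<Longrightarrow> T (\<lambda>k. c * f k) = c *\<^sub>R T f"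
  unfolding c0_linear_def by blast

lemma c0_linear_finite_support:
  assumes "c0_linear T"
  shows "T (\<lambda>k. if k < N then c k else 0) = (\<Sum>n<N. c n *\<^sub>R T (c0_unit n))"
proof (induction N)
  case 0
  show ?case using c0_linear_scale[OF assms c0_unit_in_c0, of 0 0] by simp
next
  case (Suc N)
  have split: "(\<lambda>k. if k < Suc N then c k else 0) = (\<lambda>k. (if k < N then c k else 0) + c N * c0_unit N k)"
    by (auto simp: c0_unit_def less_Suc_eq)
  have "(\<lambda>k. if k < N then c k else 0) \<in> c0" "(\<lambda>k. c N * c0_unit N k) \<in> c0"
    by (auto intro: finite_support_in_c0[of N] finite_support_in_c0[of "Suc N"] simp: c0_unit_def)
  then show ?case
    using Suc by (simp add: split c0_linear_add[OF assms] c0_linear_scale[OF assms c0_unit_in_c0])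
qed

context
  fixes T :: "(nat \<Rightarrow> real) \<Rightarrow> lsum" and b :: real
  assumes lin: "c0_linear T"
    and bounded: "\<And>f. f \<in> c0 \<Longrightarrow> norm (T f) \<le> b * c0_norm f" and b_nonneg: "0 \<le> b"
begin

lemma c0_linear_lsum_coordinate_tendsto_zero:
  "(\<lambda>n. Rep_lsum (T (c0_unit n)) i j) \<longlonglongrightarrow> 0"
proof -
  have partial: "(\<Sum>n<N. \<bar>Rep_lsum (T (c0_unit n)) i j\<bar>) \<le> b" for N
  proof -
    define f where "f k = (if k < N then sgn (Rep_lsum (T (c0_unit k)) i j) else 0)" for k
    have "f \<in> c0" unfolding f_def by (rule finite_support_in_c0[of N]) auto
    have "c0_norm f \<le> 1" unfolding f_def by (rule c0_norm_le) (auto simp: abs_sgn_eq)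
    have "(\<Sum>n<N. \<bar>Rep_lsum (T (c0_unit n)) i j\<bar>) = Rep_lsum (T f) i j"
      unfolding f_def c0_linear_finite_support[OF lin]
      by (auto simp: Rep_lsum_sum scaleR_lsum.rep_eq sgn_if intro!: sum.cong)
    also have "\<dots> \<le> b * c0_norm f"
      using abs_Rep_lsum_le_norm[of "T f" i j] bounded[OF \<open>f \<in> c0\<close>] by linarith
    also have "\<dots> \<le> b" using \<open>c0_norm f \<le> 1\<close> b_nonneg by (simp add: mult_left_le)
    finally show ?thesis .
  qed
  have "summable (\<lambda>n. \<bar>Rep_lsum (T (c0_unit n)) i j\<bar>)"
    by (rule bounded_imp_summable[of _ b]) (use partial[of "Suc _"] in \<open>auto simp: lessThan_Suc_atMost\<close>)
  then show ?thesis
    using summable_LIMSEQ_zero tendsto_rabs_zero_iff by blast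
qed

lemma c0_linear_lsum_head_tendsto_zero:
  "(\<lambda>n. \<Sum>i<M. blk (Rep_lsum (T (c0_unit n))) i) \<longlonglongrightarrow> 0"
  by (intro tendsto_null_sum tendsto_blk_zero c0_linear_lsum_coordinate_tendsto_zero)

text \<open>Adding a far-out unit vector with a suitable sign increases the norm by at least a/2,
  because T g lives essentially on finitely many blocks while the images of the unit
  vectors escape to the blocks beyond any given one.\<close>
lemma c0_linear_lsum_norm_growth:
  fixes a :: real
  assumes a_pos: "0 < a" and lower: "\<And>n. a \<le> norm (T (c0_unit n))"
  shows "\<exists>g K. (\<forall>k\<ge>K. g k = 0) \<and> (\<forall>k. \<bar>g k\<bar> \<le> 1) \<and> real N * (a / 2) \<le> norm (T g)"
proof (induction N)
  case 0
  show ?case by (intro exI[of _ "\<lambda>k. 0"] exI[of _ 0]) simp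
next
  case (Suc N)
  then obtain g K where g: "\<forall>k\<ge>K. g k = 0" "\<forall>k. \<bar>g k\<bar> \<le> 1" "real N * (a / 2) \<le> norm (T g)"
    by blast
  obtain M where "norm (\<Sum>i. blk (Rep_lsum (T g)) (i + M)) < a / 4"
    using suminf_exist_split[OF _ summable_blk_Rep_lsum, of "a / 4"] a_pos by auto
  then have tail: "(\<Sum>i. blk (Rep_lsum (T g)) (i + M)) \<le> a / 4" by simp
  have "\<forall>\<^sub>F n in sequentially. (\<Sum>i<M. blk (Rep_lsum (T (c0_unit n))) i) < a / 4 \<and> K \<le> n"
    using order_tendstoD(2)[OF c0_linear_lsum_head_tendsto_zero, of "a / 4"] a_pos
    by (auto intro: eventually_conj eventually_ge_at_top)
  then have "\<exists>n. (\<Sum>i<M. blk (Rep_lsum (T (c0_unit n))) i) < a / 4 \<and> K \<le> n"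
    by (rule eventually_happens'[OF sequentially_bot])
  then obtain n where n: "(\<Sum>i<M. blk (Rep_lsum (T (c0_unit n))) i) \<le> a / 4" "K \<le> n"
    by (auto dest: less_imp_le)
  obtain s where s: "\<bar>s\<bar> = 1" "norm (T g) + norm (T (c0_unit n)) - 2 * (a / 4) \<le> norm (T g + s *\<^sub>R T (c0_unit n))"
    using norm_lsum_add_or_diff_ge[OF tail n(1)] by blast
  define g' where "g' k = g k + s * c0_unit n k" for k
  have "g \<in> c0" using g(1) by (intro finite_support_in_c0) auto
  then have "T g' = T g + s *\<^sub>R T (c0_unit n)"
    unfolding g'_def c0_linear_add[OF lin \<open>g \<in> c0\<close> scale_in_c0[OF c0_unit_in_c0]]
    by (simp add: c0_linear_scale[OF lin c0_unit_in_c0])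
  then have "norm (T g) + a / 2 \<le> norm (T g')" using s(2) lower[of n] by simp
  then have "real (Suc N) * (a / 2) \<le> norm (T g')" using g(3) by (simp add: algebra_simps)
  moreover have "\<forall>k\<ge>max K (Suc n). g' k = 0" using g(1) by (simp add: g'_def c0_unit_def)
  moreover have "\<forall>k. \<bar>g' k\<bar> \<le> 1" using g(1,2) n(2) s(1) by (simp add: g'_def c0_unit_def)
  ultimately show ?case by blast
qed

end

theorem not_contains_c0_lsum: "\<not> contains_c0 TYPE(lsum)"
proof
  assume "contains_c0 TYPE(lsum)"
  then obtain T :: "(nat \<Rightarrow> real) \<Rightarrow> lsum" and a b where lin: "c0_linear T" and ab: "0 < a" "0 < b"
    and bounds: "\<And>f. f \<in> c0 \<Longrightarrow> a * c0_norm f \<le> norm (T f) \<and> norm (T f) \<le> b * c0_norm f"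
    unfolding contains_c0_def by blast
  obtain N :: nat where N: "2 * b / a < real N" using reals_Archimedean2 by blast
  have "a \<le> norm (T (c0_unit n))" for n
    using bounds[OF c0_unit_in_c0, of n] by (simp add: c0_norm_c0_unit)
  then obtain g K where g: "\<forall>k\<ge>K. g k = 0" "\<forall>k. \<bar>g k\<bar> \<le> 1" "real N * (a / 2) \<le> norm (T g)"
    using c0_linear_lsum_norm_growth[OF lin _ _ ab(1), of b N] bounds ab(2) by (meson less_imp_le)
  have "g \<in> c0" using g(1) by (intro finite_support_in_c0) auto
  then have "norm (T g) \<le> b" using bounds c0_norm_le[of g 1] g(2) ab(2)
    by (meson mult_left_le order_trans less_imp_le)
  moreover have "b < real N * (a / 2)" using N ab by (simp add: field_simps)
  ultimately show False using g(3) by linarith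
qed

lemma c0_octahedral_imp_contains_c0:
  fixes x :: "'a::real_normed_vector"
  assumes "c0_octahedral TYPE('a)" and "x \<noteq> 0"
  shows "contains_c0 TYPE('a)"
proof -
  obtain T :: "(nat \<Rightarrow> real) \<Rightarrow> 'a" where "c0_linear T" "\<forall>f\<in>c0. norm (T f) = c0_norm f"
    using assms(1)[unfolded c0_octahedral_def, rule_format, of "{x /\<^sub>R norm x}" 1] assms(2) by auto
  then show ?thesis unfolding contains_c0_def by (intro exI[of _ T]) (auto intro!: exI[of _ 1])
qed

theorem not_c0_octahedral_lsum: "\<not> c0_octahedral TYPE(lsum)"
proof
  define w :: "nat \<Rightarrow> nat \<Rightarrow> real" where "w i j = (if i = 0 \<and> j = 0 then 1 else 0)" for i j
  have "norm (Abs_lsum w) = blk w 0"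
    by (rule norm_Abs_lsum_single_block) (auto simp: w_def)
  also have "\<dots> = 1" by (simp add: blk_def w_def)
  finally have "Abs_lsum w \<noteq> 0" by auto
  moreover assume "c0_octahedral TYPE(lsum)"
  ultimately show False using c0_octahedral_imp_contains_c0 not_contains_c0_lsum by blast
qed

section \<open>Octahedrality of the operators into the l1-sum\<close>

definition coeff_sphere :: "'a set \<Rightarrow> ('a \<Rightarrow> real) set" where
  "coeff_sphere C = {c. (\<forall>v. v \<notin> C \<longrightarrow> c v = 0) \<and> (\<Sum>v\<in>C. \<bar>c v\<bar>) = 1}"

lemma compact_coeff_sphere:
  assumes "finite C"
  shows "compact (coeff_sphere C)"
proof -
  define B where "B = PiE UNIV (\<lambda>v. if v \<in> C then {-1..1::real} else {0})"
  have "compactin (product_topology (\<lambda>_. euclidean) UNIV) B"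
    unfolding B_def by (subst compactin_PiE) simp
  then have "compact B" by (simp add: euclidean_product_topology)
  moreover have "closed {c :: 'a \<Rightarrow> real. (\<Sum>v\<in>C. \<bar>c v\<bar>) = 1}"
    by (intro closed_Collect_eq continuous_on_sum continuous_on_rabs continuous_on_product_coordinates
        continuous_on_const)
  moreover have "coeff_sphere C = B \<inter> {c. (\<Sum>v\<in>C. \<bar>c v\<bar>) = 1}"
  proof (intro set_eqI iffI)
    fix c assume c: "c \<in> coeff_sphere C"
    have "\<bar>c v\<bar> \<le> 1" if "v \<in> C" for v
      using member_le_sum[OF that _ assms, of "\<lambda>v. \<bar>c v\<bar>"] c by (simp add: coeff_sphere_def)
    then show "c \<in> B \<inter> {c. (\<Sum>v\<in>C. \<bar>c v\<bar>) = 1}"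
      using c by (auto simp: coeff_sphere_def B_def PiE_UNIV_domain abs_le_iff)
  qed (auto simp: coeff_sphere_def B_def PiE_UNIV_domain Pi_iff split: if_splits)
  ultimately show ?thesis by (simp add: compact_Int_closed)
qed

lemma normalized_in_coeff_sphere:
  assumes "finite C" and s: "s = (\<Sum>v\<in>C. \<bar>c v\<bar>)" "0 < s"
  shows "(\<lambda>v. if v \<in> C then c v / s else 0) \<in> coeff_sphere C"
proof -
  have "(\<Sum>v\<in>C. \<bar>c v / s\<bar>) = (\<Sum>v\<in>C. \<bar>c v\<bar>) / s"
    using s(2) by (simp add: sum_divide_distrib)
  then show ?thesis using s by (simp add: coeff_sphere_def)
qed

text \<open>\<kappa> is the minimum of the norm over the compact coefficient sphere, positive by independence.\<close>
lemma norm_sum_independent_ge: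
  fixes C :: "'a::real_normed_vector set"
  assumes fin: "finite C" and ind: "independent C"
  obtains \<kappa> where "0 < \<kappa>" "\<And>c. \<kappa> * (\<Sum>v\<in>C. \<bar>c v\<bar>) \<le> norm (\<Sum>v\<in>C. c v *\<^sub>R v)"
proof (cases "C = {}")
  case True
  then show ?thesis using that[of 1] by simp
next
  case False
  then obtain v0 where "v0 \<in> C" by blast
  then have "(\<lambda>v. if v = v0 then 1 else 0) \<in> coeff_sphere C"
    using fin by (simp add: coeff_sphere_def if_distrib sum.delta cong: if_cong)
  then have ne: "coeff_sphere C \<noteq> {}" by blast
  have "continuous_on (coeff_sphere C) (\<lambda>c. norm (\<Sum>v\<in>C. c v *\<^sub>R v))"
    by (intro continuous_on_norm continuous_on_sum continuous_on_scaleR continuous_on_const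
        continuous_on_subset[OF continuous_on_product_coordinates] subset_UNIV)
  then obtain cm where cm: "cm \<in> coeff_sphere C"
    and min: "\<And>c. c \<in> coeff_sphere C \<Longrightarrow> norm (\<Sum>v\<in>C. cm v *\<^sub>R v) \<le> norm (\<Sum>v\<in>C. c v *\<^sub>R v)"
    using continuous_attains_inf[OF compact_coeff_sphere[OF fin] ne] by blast
  define \<kappa> where "\<kappa> = norm (\<Sum>v\<in>C. cm v *\<^sub>R v)"
  have "0 < \<kappa>"
  proof (rule ccontr)
    assume "\<not> 0 < \<kappa>"
    then have "(\<Sum>v\<in>C. cm v *\<^sub>R v) = 0" unfolding \<kappa>_def by simp
    then have "\<forall>v\<in>C. cm v = 0" using ind fin by (auto simp: dependent_finite)
    then show False using cm by (simp add: coeff_sphere_def)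
  qed
  moreover have "\<kappa> * (\<Sum>v\<in>C. \<bar>c v\<bar>) \<le> norm (\<Sum>v\<in>C. c v *\<^sub>R v)" for c
  proof (cases "(\<Sum>v\<in>C. \<bar>c v\<bar>) = 0")
    case False
    define s where "s = (\<Sum>v\<in>C. \<bar>c v\<bar>)"
    then have "0 < s" using False by (simp add: sum_nonneg order_le_neq_trans)
    have "(\<Sum>v\<in>C. (if v \<in> C then c v / s else 0) *\<^sub>R v) = (1 / s) *\<^sub>R (\<Sum>v\<in>C. c v *\<^sub>R v)"
      by (simp add: scaleR_sum_right)
    then have "\<kappa> \<le> norm (\<Sum>v\<in>C. c v *\<^sub>R v) / s"
      using min[OF normalized_in_coeff_sphere[OF fin s_def \<open>0 < s\<close>]] \<open>0 < s\<close> unfolding \<kappa>_def by simp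
    then show ?thesis using \<open>0 < s\<close> unfolding s_def[symmetric] by (simp add: field_simps)
  qed simp
  ultimately show ?thesis using that by blast
qed

lemma blinfun_almost_norming:
  fixes A :: "'b::real_normed_vector \<Rightarrow>\<^sub>L 'c::real_normed_vector"
  assumes "(UNIV :: 'b set) \<noteq> {0}" and "0 < \<eta>"
  obtains y where "norm y = 1" "norm A - \<eta> < norm (A y)"
proof -
  have "bdd_above (range (\<lambda>x. norm (A x) / norm x))"
    by (rule bdd_aboveI2[where M = "norm A"]) (simp add: le_onorm bounded_linear_blinfun_apply norm_blinfun.rep_eq)
  moreover have "norm A - \<eta> < (SUP x. norm (A x) / norm x)"
    using \<open>0 < \<eta>\<close> by (simp add: norm_blinfun.rep_eq onorm_def)
  ultimately obtain x where x: "norm A - \<eta> < norm (A x) / norm x"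
    using less_cSUP_iff by blast
  show ?thesis
  proof (cases "x = 0")
    case True
    obtain z :: 'b where "z \<noteq> 0" using assms(1) by blast
    then show ?thesis using that[of "z /\<^sub>R norm z"] x True by (simp add: order_less_le_trans)
  next
    case False
    then show ?thesis using that[of "x /\<^sub>R norm x"] x by (simp add: blinfun.scaleR_right divide_inverse_commute)
  qed
qed

text \<open>Compactness of the coefficient sphere turns the pointwise almost norming vectors of
  the operators in span C into finitely many.\<close>
lemma finite_almost_norming_set:
  fixes C :: "('b::real_normed_vector \<Rightarrow>\<^sub>L 'c::real_normed_vector) set"
  assumes Y: "(UNIV :: 'b set) \<noteq> {0}" and fin: "finite C" and \<eta>: "0 < \<eta>"
  obtains Ys where "finite Ys" "Ys \<noteq> {}" "\<forall>y\<in>Ys. norm y = 1"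
    "\<And>c. \<exists>y\<in>Ys. norm (\<Sum>v\<in>C. c v *\<^sub>R v) - \<eta> * (\<Sum>v\<in>C. \<bar>c v\<bar>) \<le> norm ((\<Sum>v\<in>C. c v *\<^sub>R v) y)"
proof -
  define F where "F c = (\<Sum>v\<in>C. c v *\<^sub>R v)" for c
  have F_apply: "F c y = (\<Sum>v\<in>C. c v *\<^sub>R v y)" for c y
    by (simp add: F_def blinfun.sum_left blinfun.scaleR_left)
  define yf where "yf c = (SOME y. norm y = 1 \<and> norm (F c) - \<eta> < norm (F c y))" for c
  have yf: "norm (yf c) = 1 \<and> norm (F c) - \<eta> < norm (F c (yf c))" for c
    unfolding yf_def using blinfun_almost_norming[OF Y \<eta>] by (metis (mono_tags, lifting) someI)
  define U where "U c0 = {c. norm (F c) - \<eta> < norm (F c (yf c0))}" for c0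
  have "open (U c0)" for c0
    unfolding U_def F_apply unfolding F_def
    by (intro open_Collect_less continuous_on_diff continuous_on_norm continuous_on_sum
        continuous_on_scaleR continuous_on_const continuous_on_product_coordinates)
  moreover have "coeff_sphere C \<subseteq> (\<Union>c\<in>coeff_sphere C. U c)"
    using yf unfolding U_def by blast
  ultimately obtain D where D: "D \<subseteq> coeff_sphere C" "finite D" "coeff_sphere C \<subseteq> (\<Union>c\<in>D. U c)"
    using compactE_image[OF compact_coeff_sphere[OF fin]] by metis
  define Ys where "Ys = insert (yf (\<lambda>_. 0)) (yf ` D)" \<comment> \<open>nonempty even if C is\<close>
  have "\<exists>y\<in>Ys. norm (F c) - \<eta> * (\<Sum>v\<in>C. \<bar>c v\<bar>) \<le> norm (F c y)" for c
  proof (cases "(\<Sum>v\<in>C. \<bar>c v\<bar>) = 0")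
    case True
    then have "\<forall>v\<in>C. c v = 0" using fin by (simp add: sum_nonneg_eq_0_iff)
    then show ?thesis unfolding Ys_def F_def by auto
  next
    case False
    define s where "s = (\<Sum>v\<in>C. \<bar>c v\<bar>)"
    then have s: "0 < s" using False by (simp add: sum_nonneg order_le_neq_trans)
    define c' where "c' v = (if v \<in> C then c v / s else 0)" for v
    have "c' \<in> coeff_sphere C" unfolding c'_def by (rule normalized_in_coeff_sphere[OF fin s_def s])
    then obtain c0 where "c0 \<in> D" "c' \<in> U c0" using D(3) by blast
    moreover have "F c' = (1 / s) *\<^sub>R F c" by (simp add: F_def c'_def scaleR_sum_right)
    ultimately have "norm (F c) / s - \<eta> < norm (F c (yf c0)) / s"
      using s by (simp add: U_def blinfun.scaleR_left)
    then have "(norm (F c) / s - \<eta>) * s < norm (F c (yf c0)) / s * s"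
      by (rule mult_strict_right_mono[OF _ s])
    then have "norm (F c) - \<eta> * s \<le> norm (F c (yf c0))"
      using s by (simp add: algebra_simps)
    then show ?thesis using \<open>c0 \<in> D\<close> unfolding Ys_def s_def by blast
  qed
  moreover have "finite Ys" "Ys \<noteq> {}" "\<forall>y\<in>Ys. norm y = 1"
    using D(2) yf unfolding Ys_def by auto
  ultimately show ?thesis using that unfolding F_def by blast
qed

lemma far_block_small:
  fixes C :: "('b::real_normed_vector \<Rightarrow>\<^sub>L lsum) set"
  assumes "finite C" "finite Ys" "0 < \<eta>"
  obtains n where "N \<le> n" "\<And>v y. v \<in> C \<Longrightarrow> y \<in> Ys \<Longrightarrow> blk (Rep_lsum (v y)) n \<le> \<eta>"
proof -
  have "\<forall>\<^sub>F n in sequentially. blk (Rep_lsum (fst p (snd p))) n < \<eta>" for p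
    using summable_LIMSEQ_zero[OF summable_blk_Rep_lsum] \<open>0 < \<eta>\<close> by (rule order_tendstoD(2))
  then have "\<forall>\<^sub>F n in sequentially. \<forall>p\<in>C \<times> Ys. blk (Rep_lsum (fst p (snd p))) n < \<eta>"
    using assms(1,2) by (intro eventually_ball_finite) auto
  moreover have "\<forall>\<^sub>F n in sequentially. N \<le> n" by (rule eventually_ge_at_top)
  ultimately have "\<exists>n. (\<forall>p\<in>C \<times> Ys. blk (Rep_lsum (fst p (snd p))) n < \<eta>) \<and> N \<le> n"
    by (intro eventually_happens'[OF sequentially_bot] eventually_conj)
  then obtain n where n: "\<forall>p\<in>C \<times> Ys. blk (Rep_lsum (fst p (snd p))) n < \<eta>" "N \<le> n"
    by blast
  have "blk (Rep_lsum (v y)) n \<le> \<eta>" if vy: "v \<in> C" "y \<in> Ys" for v y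
    using bspec[OF n(1), of "(v, y)"] vy by simp
  with n(2) show ?thesis using that by blast
qed

lemma single_block_operator:
  fixes Ys :: "'b::real_normed_vector set"
  assumes Ys: "finite Ys" "Ys \<noteq> {}" "\<forall>y\<in>Ys. norm y = 1" and card: "card Ys \<le> Suc n"
  obtains S :: "'b \<Rightarrow>\<^sub>L lsum" where "norm S = 1"
    "\<And>y i j. i \<noteq> n \<Longrightarrow> Rep_lsum (S y) i j = 0"
    "\<And>y. y \<in> Ys \<Longrightarrow> 1 \<le> blk (Rep_lsum (S y)) n"
proof -
  obtain ys where ys: "set ys = Ys" "distinct ys" using finite_distinct_list[OF Ys(1)] by blast
  then have len: "length ys \<le> Suc n" using card distinct_card by metis
  define \<phi> where "\<phi> k = (SOME f. linear f \<and> (\<forall>x. \<bar>f x\<bar> \<le> norm x) \<and> f (ys ! k) = norm (ys ! k))" for k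
  have \<phi>: "linear (\<phi> k) \<and> (\<forall>x. \<bar>\<phi> k x\<bar> \<le> norm x) \<and> \<phi> k (ys ! k) = norm (ys ! k)" for k
    unfolding \<phi>_def by (rule someI_ex[OF norming_functional_exists])
  define w where "w y i j = (if i = n \<and> j < length ys then \<phi> j y else 0)" for y i j
  define Sf where "Sf y = Abs_lsum (w y)" for y
  have w_zero: "\<And>i j. i \<noteq> n \<Longrightarrow> w y i j = 0" "\<And>j. n < j \<Longrightarrow> w y n j = 0" for y
    using len by (auto simp: w_def)
  have Rep_Sf: "Rep_lsum (Sf y) = w y" for y
    unfolding Sf_def using w_zero by (rule Rep_lsum_Abs_lsum_single_block)
  have norm_Sf: "norm (Sf y) = blk (w y) n" for y
    unfolding Sf_def using w_zero by (rule norm_Abs_lsum_single_block)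
  have "linear Sf"
  proof (rule linearI)
    show "Sf (x + y) = Sf x + Sf y" for x y
      using \<phi> by (auto simp: Rep_lsum_inject[symmetric] plus_lsum.rep_eq Rep_Sf w_def linear_add intro!: ext)
    show "Sf (c *\<^sub>R x) = c *\<^sub>R Sf x" for c x
      using \<phi> by (auto simp: Rep_lsum_inject[symmetric] scaleR_lsum.rep_eq Rep_Sf w_def linear_scale intro!: ext)
  qed
  moreover have bound: "norm (Sf y) \<le> norm y" for y
    unfolding norm_Sf using \<phi> by (intro blk_le) (simp add: w_def)
  ultimately have bl: "bounded_linear Sf"
    using bounded_linear_intro[of Sf 1] by (simp add: linear_add linear_scale)
  define S where "S = Blinfun Sf"
  have S_apply: "blinfun_apply S = Sf" unfolding S_def using bl by (rule bounded_linear_Blinfun_apply)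
  have large: "1 \<le> blk (Rep_lsum (S y)) n" if y: "y \<in> Ys" for y
  proof -
    obtain k where k: "k < length ys" "ys ! k = y" using y unfolding ys(1)[symmetric] in_set_conv_nth by blast
    have "\<phi> k y = 1" using \<phi>[of k] k(2) Ys(3) y by simp
    moreover have "\<bar>w y n k\<bar> \<le> blk (w y) n" using k(1) len by (intro blk_ge) linarith
    ultimately show ?thesis using k(1) by (simp add: w_def S_apply Rep_Sf)
  qed
  have "norm S = 1"
  proof (rule antisym)
    show "norm S \<le> 1"
      unfolding norm_blinfun.rep_eq S_apply by (rule onorm_bound) (simp_all add: bound)
    obtain y where "y \<in> Ys" using Ys(2) by blast
    then have "1 \<le> norm (S y)" using large[of y] by (simp add: S_apply norm_Sf Rep_Sf)
    also have "\<dots> \<le> norm S * norm y" by (rule norm_blinfun)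
    finally show "1 \<le> norm S" using \<open>y \<in> Ys\<close> Ys(3) by simp
  qed
  moreover have "Rep_lsum (S y) i j = 0" if "i \<noteq> n" for y i j
    using that by (simp add: S_apply Rep_Sf w_def)
  ultimately show ?thesis using that large by blast
qed

text \<open>Each T in span C almost attains its norm at some y in Ys, where T y is small on block n
  while S y is large there; as S y lives on block n alone, the norms of T y and t S y add up.\<close>
lemma octahedral_estimate:
  fixes C :: "('b::real_normed_vector \<Rightarrow>\<^sub>L lsum) set" and S :: "'b \<Rightarrow>\<^sub>L lsum"
  assumes fin: "finite C"
    and independent: "\<And>c. \<kappa> * (\<Sum>v\<in>C. \<bar>c v\<bar>) \<le> norm (\<Sum>v\<in>C. c v *\<^sub>R v)"
    and \<epsilon>: "0 \<le> \<epsilon>" "3 * \<eta> \<le> \<epsilon> * \<kappa>"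
    and norming: "\<And>c. \<exists>y\<in>Ys. norm (\<Sum>v\<in>C. c v *\<^sub>R v) - \<eta> * (\<Sum>v\<in>C. \<bar>c v\<bar>) \<le> norm ((\<Sum>v\<in>C. c v *\<^sub>R v) y)"
    and unit: "\<forall>y\<in>Ys. norm y = 1"
    and small: "\<And>v y. v \<in> C \<Longrightarrow> y \<in> Ys \<Longrightarrow> blk (Rep_lsum (v y)) n \<le> \<eta>"
    and S_block: "\<And>y i j. i \<noteq> n \<Longrightarrow> Rep_lsum (S y) i j = 0"
    and S_large: "\<And>y. y \<in> Ys \<Longrightarrow> 1 \<le> blk (Rep_lsum (S y)) n"
    and T: "T \<in> span C"
  shows "(1 - \<epsilon>) * (norm T + \<bar>t\<bar>) \<le> norm (T + t *\<^sub>R S)"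
proof -
  obtain u where T_eq: "T = (\<Sum>v\<in>C. u v *\<^sub>R v)" using T span_finite[OF fin] by auto
  define s where "s = (\<Sum>v\<in>C. \<bar>u v\<bar>)"
  obtain y where y: "y \<in> Ys" "norm T - \<eta> * s \<le> norm (T y)"
    using norming[of u] unfolding T_eq s_def by blast
  have "blk (Rep_lsum (T y)) n \<le> (\<Sum>v\<in>C. blk (Rep_lsum (u v *\<^sub>R v y)) n)"
    unfolding T_eq by (simp add: blinfun.sum_left blinfun.scaleR_left blk_Rep_lsum_sum_le)
  also have "\<dots> \<le> (\<Sum>v\<in>C. \<bar>u v\<bar> * \<eta>)"
    using small[OF _ y(1)] by (intro sum_mono) (simp add: blk_Rep_lsum_scaleR mult_left_mono)
  finally have T_small: "blk (Rep_lsum (T y)) n \<le> s * \<eta>"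
    by (simp add: s_def sum_distrib_right)
  have "\<bar>t\<bar> \<le> blk (Rep_lsum (t *\<^sub>R S y)) n"
    using S_large[OF y(1)] by (simp add: blk_Rep_lsum_scaleR mult_le_cancel_left1)
  moreover have "norm (T y) - 2 * blk (Rep_lsum (T y)) n + blk (Rep_lsum (t *\<^sub>R S y)) n \<le> norm (T y + t *\<^sub>R S y)"
    by (rule norm_add_single_block_ge) (simp add: scaleR_lsum.rep_eq S_block)
  moreover have "norm (T y + t *\<^sub>R S y) \<le> norm (T + t *\<^sub>R S)"
    using norm_blinfun[of "T + t *\<^sub>R S" y] unit y(1) by (simp add: blinfun.add_left blinfun.scaleR_left)
  moreover have "3 * (s * \<eta>) \<le> \<epsilon> * norm T"
  proof -
    have "3 * (s * \<eta>) \<le> \<epsilon> * (\<kappa> * s)"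
      using \<epsilon>(2) mult_right_mono[OF \<epsilon>(2), of s] by (simp add: s_def sum_nonneg algebra_simps)
    also have "\<dots> \<le> \<epsilon> * norm T"
      using independent[of u] \<epsilon>(1) unfolding T_eq s_def by (rule mult_left_mono)
    finally show ?thesis .
  qed
  moreover have "(1 - \<epsilon>) * \<bar>t\<bar> \<le> \<bar>t\<bar>" using \<epsilon>(1) by (simp add: algebra_simps)
  ultimately show ?thesis using y(2) T_small by (simp add: algebra_simps)
qed

theorem octahedral_blinfun_lsum:
  assumes Y: "(UNIV :: 'b::real_normed_vector set) \<noteq> {0}"
  shows "octahedral (UNIV :: ('b \<Rightarrow>\<^sub>L lsum) set)"
  unfolding octahedral_def
proof (intro allI impI)
  fix E :: "('b \<Rightarrow>\<^sub>L lsum) set" and \<epsilon> :: real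
  assume "subspace E \<and> E \<subseteq> UNIV \<and> (\<exists>B. finite B \<and> E = span B) \<and> 0 < \<epsilon>"
  then obtain B where B: "finite B" "E = span B" and \<epsilon>: "0 < \<epsilon>" by blast
  obtain C where C: "C \<subseteq> span B" "independent C" "span B \<subseteq> span C"
    by (rule basis_exists[of "span B"])
  have fin: "finite C" using independent_span_bound[OF B(1) C(2,1)] by simp
  obtain \<kappa> where \<kappa>: "0 < \<kappa>" "\<And>c. \<kappa> * (\<Sum>v\<in>C. \<bar>c v\<bar>) \<le> norm (\<Sum>v\<in>C. c v *\<^sub>R v)"
    using norm_sum_independent_ge[OF fin C(2)] by blast
  define \<eta> where "\<eta> = \<epsilon> * \<kappa> / 3"
  have "0 < \<eta>" using \<epsilon> \<kappa>(1) by (simp add: \<eta>_def)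
  obtain Ys where Ys: "finite Ys" "Ys \<noteq> {}" "\<forall>y\<in>Ys. norm y = 1"
    "\<And>c. \<exists>y\<in>Ys. norm (\<Sum>v\<in>C. c v *\<^sub>R v) - \<eta> * (\<Sum>v\<in>C. \<bar>c v\<bar>) \<le> norm ((\<Sum>v\<in>C. c v *\<^sub>R v) y)"
    by (rule finite_almost_norming_set[OF Y fin \<open>0 < \<eta>\<close>]) blast
  obtain n where "card Ys \<le> n"
    and small: "\<And>v y. v \<in> C \<Longrightarrow> y \<in> Ys \<Longrightarrow> blk (Rep_lsum (v y)) n \<le> \<eta>"
    by (rule far_block_small[OF fin Ys(1) \<open>0 < \<eta>\<close>]) blast
  then have card: "card Ys \<le> Suc n" by simp
  obtain S :: "'b \<Rightarrow>\<^sub>L lsum" where S: "norm S = 1"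
    "\<And>y i j. i \<noteq> n \<Longrightarrow> Rep_lsum (S y) i j = 0" "\<And>y. y \<in> Ys \<Longrightarrow> 1 \<le> blk (Rep_lsum (S y)) n"
    using single_block_operator[OF Ys(1-3) card] by blast
  have "(1 - \<epsilon>) * (norm T + \<bar>t\<bar>) \<le> norm (T + t *\<^sub>R S)" if "T \<in> E" for T t
    using \<epsilon> \<kappa>(2) Ys(3,4) small S(2,3) C(3) B(2) that
    by (intro octahedral_estimate[OF fin, of \<kappa> \<epsilon> \<eta> Ys n S]) (auto simp: \<eta>_def)
  then show "\<exists>y\<in>UNIV. norm y = 1 \<and> (\<forall>x\<in>E. \<forall>t. (1 - \<epsilon>) * (norm x + \<bar>t\<bar>) \<le> norm (x + t *\<^sub>R y))"
    using S(1) by blast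
qed

theorem mainTheorem7:
  shows "((UNIV :: 'b::banach set) \<noteq> {0} \<longrightarrow> octahedral (UNIV :: ('b \<Rightarrow>\<^sub>L lsum) set))
         \<and> \<not> contains_c0 TYPE(lsum) \<and> \<not> c0_octahedral TYPE(lsum)"
  using octahedral_blinfun_lsum not_contains_c0_lsum not_c0_octahedral_lsum by blast

end
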